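(* Let $n\in\{2,3\}$, let $D=\bigcup_{m=1}^{M}D_m\subset\mathbb{R}^n$ be a finite union of bounded domains with pairwise disjoint closures, let $k_{max}>0$, and let $g\in C(0,k_{max})$ be a given function with $g(k)\neq 0$ for all $k$ in an interval $I=(a,b)\subset(0,k_{max})$. Let $f\in L^2(\mathbb{R}^n)$ vanish outside $D$, let $F(y,k)=f(y)g(k)$, and define the far field pattern $$u^\infty(\theta,k)=\int_D e^{-ik\theta\cdot y}F(y,k)\,dy,\qquad \theta\in S^{n-1},\ k\in(0,k_{max}).$$ Fix an observation direction $\theta\in S^{n-1}$. Assume that the set $$\{\tau\in\mathbb{R}\,:\,\Pi_\tau\subset S_D(\theta),\ \hat f(\tau)=0\}$$ has Lebesgue measure zero. Then the strip $S_D(\theta)$ is uniquely determined by the far field data $u^\infty(\theta,k)$, $k\in I$ (at the single direction $\theta$); that is, if $D'$, $f'$ is a second pair satisfying the same hypotheses (with the same $g$ and $\theta$) and the corresponding far field patterns satisfy $u^\infty(\theta,k)=u'^\infty(\theta,k)$ for all $k\in I$, then $S_D(\theta)=S_{D'}(\theta)$.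
   Context: For $\tau\in\mathbb{R}$, $\Pi_\tau:=\{y\in\mathbb{R}^n: y\cdot\theta+\tau=0\}$ is the hyperplane with normal $\theta$, and $\hat f(\tau):=\int_{\Pi_\tau}f(y)\,ds(y)$. The $\theta$-strip hull of $D$ is $S_D(\theta):=\{y\in\mathbb{R}^n:\ \inf_{z\in D}z\cdot\theta\le y\cdot\theta\le\sup_{z\in D}z\cdot\theta\}$. *)

theory Defs
  imports "HOL-Analysis.Analysis"
begin

definition finite_union_domains :: "'a::euclidean_space set \<Rightarrow> bool" where
  "finite_union_domains D \<longleftrightarrow>
     (\<exists>\<D>. finite \<D> \<and> \<D> \<noteq> {} \<and>
        (\<forall>Dm\<in>\<D>. open Dm \<and> connected Dm \<and> bounded Dm \<and> Dm \<noteq> {}) \<and>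
        pairwise (\<lambda>A B. closure A \<inter> closure B = {}) \<D> \<and>
        D = \<Union>\<D>)"

definition hyperplane :: "'a::euclidean_space \<Rightarrow> real \<Rightarrow> 'a set" where
  "hyperplane \<theta> \<tau> = {y. y \<bullet> \<theta> + \<tau> = 0}"

definition perp_basis :: "'a::euclidean_space \<Rightarrow> nat \<Rightarrow> 'a" where
  "perp_basis \<theta> = (SOME e. \<forall>i<DIM('a) - 1. e i \<bullet> \<theta> = 0 \<and>
        (\<forall>j<DIM('a) - 1. e i \<bullet> e j = (if i = j then 1 else 0)))"

text \<open>Surface integral of f over the hyperplane Pi_tau, computed through the isometric
  parametrization t \<mapsto> -tau theta + sum_i t_i e_i of Pi_tau by R^(n-1)
  (Lebesgue measure on R^(n-1) = product of n-1 copies of lborel).\<close>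
definition hyperplane_integral ::
  "'a::euclidean_space \<Rightarrow> ('a \<Rightarrow> complex) \<Rightarrow> real \<Rightarrow> complex" where
  "hyperplane_integral \<theta> f \<tau> =
     (\<integral>t. f ((- \<tau>) *\<^sub>R \<theta> + (\<Sum>i<DIM('a) - 1. t i *\<^sub>R perp_basis \<theta> i))
        \<partial>(PiM {..<DIM('a) - 1} (\<lambda>_. lborel)))"

definition strip_hull :: "'a::euclidean_space set \<Rightarrow> 'a \<Rightarrow> 'a set" where
  "strip_hull D \<theta> = {y. (INF z\<in>D. z \<bullet> \<theta>) \<le> y \<bullet> \<theta> \<and> y \<bullet> \<theta> \<le> (SUP z\<in>D. z \<bullet> \<theta>)}"

definition far_field ::
  "'a::euclidean_space set \<Rightarrow> ('a \<Rightarrow> complex) \<Rightarrow> (real \<Rightarrow> complex) \<Rightarrow> 'a \<Rightarrow> real \<Rightarrow> complex" where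
  "far_field D f g \<theta> k =
     (LINT y:D|lebesgue. exp (- \<i> * complex_of_real (k * (\<theta> \<bullet> y))) * (f y * g k))"

definition admissible_pair :: "'a::euclidean_space set \<Rightarrow> ('a \<Rightarrow> complex) \<Rightarrow> 'a \<Rightarrow> bool" where
  "admissible_pair D f \<theta> \<longleftrightarrow>
     finite_union_domains D \<and>
     f \<in> borel_measurable lebesgue \<and>
     integrable lebesgue (\<lambda>y. (norm (f y))\<^sup>2) \<and>
     (\<forall>y. y \<notin> D \<longrightarrow> f y = 0) \<and>
     {\<tau>. hyperplane \<theta> \<tau> \<subseteq> strip_hull D \<theta> \<and> hyperplane_integral \<theta> f \<tau> = 0}
        \<in> null_sets lborel"

end

theory Submission
  imports Defs "HOL-Probability.Probability"
begin

text \<open>Slicing \<open>D\<close> along the hyperplanes \<open>\<Pi>\<^sub>\<tau>\<close> turns the far field at the direction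
  \<open>\<theta>\<close> into a one-dimensional Fourier transform:
  \<open>u\<^sup>\<infinity>(\<theta>, k) = g(k) \<integral> e\<^sup>i\<^sup>k\<^sup>\<tau> \<hat>f(\<tau>) d\<tau>\<close>. As \<open>\<hat>f\<close> has bounded support, its Fourier
  transform is real analytic in \<open>k\<close>; so equal data on \<open>I\<close>, where \<open>g \<noteq> 0\<close>, give equal
  transforms everywhere, and by the injectivity of the Fourier transform on \<open>L\<^sup>1\<close> (Levy's
  uniqueness theorem) \<open>\<hat>f = \<hat>f'\<close> almost everywhere. The set of \<open>\<tau>\<close> with
  \<open>\<Pi>\<^sub>\<tau> \<subseteq> S\<^sub>D(\<theta>)\<close> is an interval outside of which \<open>\<hat>f\<close> vanishes and, by hypothesis, inside
  of which it vanishes only on a null set; it is therefore determined by \<open>\<hat>f\<close>, and so is the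
  strip.\<close>

section \<open>Fourier transforms on the line\<close>

definition fourier_transform :: "(real \<Rightarrow> complex) \<Rightarrow> real \<Rightarrow> complex" where
  "fourier_transform w k = (\<integral>\<tau>. iexp (k * \<tau>) * w \<tau> \<partial>lborel)"

lemma integrable_fourier_integrand:
  fixes w :: "real \<Rightarrow> complex"
  assumes "integrable lborel w"
  shows "integrable lborel (\<lambda>\<tau>. iexp (k * \<tau>) * w \<tau>)"
proof (rule Bochner_Integration.integrable_bound[OF assms])
  show "(\<lambda>\<tau>. iexp (k * \<tau>) * w \<tau>) \<in> borel_measurable lborel"
    using assms by measurable
  show "AE \<tau> in lborel. norm (iexp (k * \<tau>) * w \<tau>) \<le> norm (w \<tau>)"
    by (simp add: norm_mult norm_exp_i_times flip: exp_of_real)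
qed

lemma fourier_transform_diff:
  assumes "integrable lborel u" "integrable lborel v"
  shows "fourier_transform (\<lambda>\<tau>. u \<tau> - v \<tau>) k = fourier_transform u k - fourier_transform v k"
  unfolding fourier_transform_def right_diff_distrib
  by (intro Bochner_Integration.integral_diff integrable_fourier_integrand assms)

lemma fourier_transform_add:
  assumes "integrable lborel u" "integrable lborel v"
  shows "fourier_transform (\<lambda>\<tau>. u \<tau> + v \<tau>) k = fourier_transform u k + fourier_transform v k"
  unfolding fourier_transform_def distrib_left
  by (intro Bochner_Integration.integral_add integrable_fourier_integrand assms)

lemma fourier_transform_divide:
  "fourier_transform (\<lambda>\<tau>. w \<tau> / c) k = fourier_transform w k / c"
  unfolding fourier_transform_def times_divide_eq_right by (rule integral_divide_zero)

lemma fourier_transform_cnj: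
  "fourier_transform (\<lambda>\<tau>. cnj (w \<tau>)) k = cnj (fourier_transform w (- k))"
  unfolding fourier_transform_def
  by (simp flip: Bochner_Integration.integral_cnj add: exp_cnj)

lemma powser_coeff_eq_0_if_vanishing_near_0:
  fixes c :: "nat \<Rightarrow> 'a::{real_normed_field,banach}"
  assumes \<delta>: "\<delta> > 0" and sums: "\<And>x. (\<lambda>m. c m * x ^ m) sums F x"
    and vanish: "\<And>x. norm x < \<delta> \<Longrightarrow> F x = 0"
  shows "c m = 0"
proof (induction m rule: less_induct)
  case (less m)
  have shifted: "(\<lambda>j. c (j + m) * x ^ j) sums (F x / x ^ m)" if "x \<noteq> 0" for x
  proof -
    have "(\<lambda>i. c (i + m) * x ^ (i + m)) sums (F x - (\<Sum>i<m. c i * x ^ i))"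
      using sums[of x] by (subst sums_iff_shift) simp
    then have "(\<lambda>i. c (i + m) * x ^ (i + m) / x ^ m) sums (F x / x ^ m)"
      using less by (intro sums_divide) simp
    then show ?thesis using that by (simp add: power_add)
  qed
  have "((\<lambda>x. F x / x ^ m) \<longlongrightarrow> c (0 + m)) (at 0)"
    by (rule powser_limit_0_strong[OF \<delta>]) (use shifted in auto)
  moreover have "((\<lambda>x. F x / x ^ m) \<longlongrightarrow> 0) (at 0)"
    by (rule tendsto_eventually) (use \<delta> vanish in \<open>auto simp: eventually_at intro!: exI[of _ \<delta>]\<close>)
  ultimately show ?case using tendsto_unique by force
qed

lemma sums_integral_dominated:
  fixes f :: "nat \<Rightarrow> 'a \<Rightarrow> 'b::{banach, second_countable_topology}"
  assumes f: "\<And>m. f m \<in> borel_measurable M" and w: "integrable M w"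
    and bound: "\<And>m x. norm (f m x) \<le> C m * w x" and C: "summable C"
  shows "(\<lambda>m. integral\<^sup>L M (f m)) sums (\<integral>x. (\<Sum>m. f m x) \<partial>M)"
proof -
  have integrable_f: "integrable M (f m)" for m
  proof (rule Bochner_Integration.integrable_bound)
    show "integrable M (\<lambda>x. C m * w x)" using w by simp
    have "norm (f m x) \<le> norm (C m * w x)" for x
      by (metis bound abs_ge_self order_trans real_norm_def)
    then show "AE x in M. norm (f m x) \<le> norm (C m * w x)" by simp
  qed (rule f)
  show ?thesis
  proof (rule sums_integral[OF integrable_f])
    show "AE x in M. summable (\<lambda>m. norm (f m x))"
      using bound by (intro AE_I2 summable_comparison_test'[OF summable_mult2[OF C]]) auto
    have "norm (\<integral>x. norm (f m x) \<partial>M) \<le> C m * (\<integral>x. w x \<partial>M)" for m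
    proof -
      have "(\<integral>x. norm (f m x) \<partial>M) \<le> (\<integral>x. C m * w x \<partial>M)"
        using integrable_f w bound by (intro integral_mono) auto
      then show ?thesis by simp
    qed
    then show "summable (\<lambda>m. \<integral>x. norm (f m x) \<partial>M)"
      by (rule summable_comparison_test'[OF summable_mult2[OF C]])
  qed
qed

text \<open>The exponential series converges in \<open>L\<^sup>1\<close> because \<open>w\<close> has bounded support.\<close>
lemma fourier_transform_powser:
  fixes w :: "real \<Rightarrow> complex"
  assumes w: "integrable lborel w" and supp: "\<And>\<tau>. R < \<bar>\<tau>\<bar> \<Longrightarrow> w \<tau> = 0"
  shows "(\<lambda>m. fourier_transform (\<lambda>\<tau>. ((\<i> * complex_of_real \<tau>) ^ m /\<^sub>R fact m) * w \<tau>) k0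
            * complex_of_real s ^ m) sums fourier_transform w (k0 + s)"
proof -
  define f where "f m \<tau> = iexp (k0 * \<tau>)
    * (((\<i> * complex_of_real (s * \<tau>)) ^ m /\<^sub>R fact m) * w \<tau>)" for m \<tau>
  have [measurable]: "w \<in> borel_measurable lborel" using w by simp
  have bound: "norm (f m \<tau>) \<le> (\<bar>s\<bar> * \<bar>R\<bar>) ^ m / fact m * norm (w \<tau>)" for m \<tau>
  proof (cases "R < \<bar>\<tau>\<bar>")
    case False
    have "norm (f m \<tau>) = (\<bar>s\<bar> * \<bar>\<tau>\<bar>) ^ m / fact m * norm (w \<tau>)"
      by (simp add: f_def norm_mult norm_power abs_mult power_mult_distrib norm_exp_i_times
          divide_inverse mult.commute flip: exp_of_real)
    also have "\<dots> \<le> (\<bar>s\<bar> * \<bar>R\<bar>) ^ m / fact m * norm (w \<tau>)"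
      using False by (intro mult_right_mono divide_right_mono power_mono mult_left_mono) auto
    finally show ?thesis .
  qed (simp add: supp f_def)
  have "summable (\<lambda>m. (\<bar>s\<bar> * \<bar>R\<bar>) ^ m / fact m)"
    using summable_exp[of "\<bar>s\<bar> * \<bar>R\<bar>"] by (simp add: divide_inverse mult.commute)
  moreover have "f m \<in> borel_measurable lborel" for m unfolding f_def by measurable
  ultimately have "(\<lambda>m. integral\<^sup>L lborel (f m)) sums (\<integral>\<tau>. (\<Sum>m. f m \<tau>) \<partial>lborel)"
    using w by (intro sums_integral_dominated[OF _ _ bound]) auto
  moreover have "(\<Sum>m. f m \<tau>) = iexp ((k0 + s) * \<tau>) * w \<tau>" for \<tau>
  proof -
    have "(\<lambda>m. f m \<tau>) sums (iexp (k0 * \<tau>) * (iexp (s * \<tau>) * w \<tau>))"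
      unfolding f_def by (intro sums_mult sums_mult2 exp_converges)
    then show ?thesis by (simp add: sums_iff algebra_simps flip: exp_add)
  qed
  moreover have "integral\<^sup>L lborel (f m) = fourier_transform
      (\<lambda>\<tau>. ((\<i> * complex_of_real \<tau>) ^ m /\<^sub>R fact m) * w \<tau>) k0 * complex_of_real s ^ m" for m
  proof -
    have "f m = (\<lambda>\<tau>. iexp (k0 * \<tau>)
        * (((\<i> * complex_of_real \<tau>) ^ m /\<^sub>R fact m) * w \<tau>) * complex_of_real s ^ m)"
      by (rule ext) (simp add: f_def power_mult_distrib algebra_simps)
    then show ?thesis
      unfolding fourier_transform_def by (simp only: integral_mult_left_zero)
  qed
  ultimately show ?thesis by (simp add: fourier_transform_def)
qed

text \<open>Analytic continuation along the expansion above.\<close>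
lemma fourier_transform_eq_0_if_eq_0_on_interval:
  fixes w :: "real \<Rightarrow> complex"
  assumes w: "integrable lborel w" and supp: "\<And>\<tau>. R < \<bar>\<tau>\<bar> \<Longrightarrow> w \<tau> = 0"
    and ab: "a < b" and vanish: "\<And>k. k \<in> {a<..<b} \<Longrightarrow> fourier_transform w k = 0"
  shows "fourier_transform w k = 0"
proof -
  define k0 where "k0 = (a + b) / 2"
  define A where "A m = fourier_transform (\<lambda>\<tau>. ((\<i> * complex_of_real \<tau>) ^ m /\<^sub>R fact m) * w \<tau>) k0"
    for m
  have sums: "(\<lambda>m. A m * complex_of_real s ^ m) sums fourier_transform w (k0 + s)" for s
    unfolding A_def by (rule fourier_transform_powser[OF w supp])
  have \<delta>: "(b - a) / 2 > 0" using ab by simp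
  have vanish': "fourier_transform w (k0 + s) = 0" if "norm s < (b - a) / 2" for s
    using that by (intro vanish) (auto simp: k0_def abs_less_iff field_simps)
  have "Re (A m) = 0" for m
  proof (rule powser_coeff_eq_0_if_vanishing_near_0[OF \<delta>])
    show "(\<lambda>m. Re (A m) * s ^ m) sums Re (fourier_transform w (k0 + s))" for s
      using sums_Re[OF sums[of s]] by (simp flip: of_real_power)
    show "Re (fourier_transform w (k0 + s)) = 0" if "norm s < (b - a) / 2" for s
      using vanish'[OF that] by simp
  qed
  moreover have "Im (A m) = 0" for m
  proof (rule powser_coeff_eq_0_if_vanishing_near_0[OF \<delta>])
    show "(\<lambda>m. Im (A m) * s ^ m) sums Im (fourier_transform w (k0 + s))" for s
      using sums_Im[OF sums[of s]] by (simp flip: of_real_power)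
    show "Im (fourier_transform w (k0 + s)) = 0" if "norm s < (b - a) / 2" for s
      using vanish'[OF that] by simp
  qed
  ultimately have "A = (\<lambda>_. 0)" by (simp add: complex_eq_iff fun_eq_iff)
  then show ?thesis using sums[of "k - k0"] by (simp add: sums_iff)
qed

lemma real_distribution_density_normalized:
  fixes Q :: "real \<Rightarrow> real"
  assumes [measurable]: "Q \<in> borel_measurable lborel" and "integrable lborel Q"
    and "\<And>x. Q x \<ge> 0" and "integral\<^sup>L lborel Q = c" and "c > 0"
  shows "real_distribution (density lborel (\<lambda>x. ennreal (Q x / c)))"
proof -
  have "emeasure (density lborel (\<lambda>x. ennreal (Q x / c))) UNIV = (\<integral>\<^sup>+x. ennreal (Q x / c) \<partial>lborel)"
    by (simp add: emeasure_density)
  also have "\<dots> = ennreal (integral\<^sup>L lborel (\<lambda>x. Q x / c))"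
    using assms by (intro nn_integral_eq_integral) auto
  also have "\<dots> = 1" using assms by simp
  finally show ?thesis
    unfolding real_distribution_def real_distribution_axioms_def by (auto intro!: prob_spaceI)
qed

lemma char_density_normalized:
  fixes Q :: "real \<Rightarrow> real"
  assumes [measurable]: "Q \<in> borel_measurable lborel" and "\<And>x. Q x \<ge> 0" and "c > 0"
  shows "char (density lborel (\<lambda>x. ennreal (Q x / c))) t
    = fourier_transform (\<lambda>\<tau>. complex_of_real (Q \<tau>)) t / complex_of_real c"
proof -
  have "char (density lborel (\<lambda>x. ennreal (Q x / c))) t = (\<integral>x. (Q x / c) *\<^sub>R iexp (t * x) \<partial>lborel)"
    unfolding char_def using assms by (subst integral_density) auto
  also have "\<dots> = (\<integral>x. iexp (t * x) * complex_of_real (Q x) / complex_of_real c \<partial>lborel)"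
    by (simp add: scaleR_conv_of_real mult.commute)
  finally show ?thesis unfolding fourier_transform_def by simp
qed

text \<open>Normalized, nonnegative integrable functions are probability densities, and their Fourier
  transforms are characteristic functions: Levy's uniqueness theorem applies.\<close>
lemma density_normalized_eq_if_fourier_transform_eq:
  fixes P N :: "real \<Rightarrow> real"
  assumes P: "integrable lborel P" "\<And>x. P x \<ge> 0" and N: "integrable lborel N" "\<And>x. N x \<ge> 0"
    and c: "integral\<^sup>L lborel P = c" "integral\<^sup>L lborel N = c" "c > 0"
    and eq: "\<And>k. fourier_transform (\<lambda>\<tau>. complex_of_real (P \<tau>)) k
                  = fourier_transform (\<lambda>\<tau>. complex_of_real (N \<tau>)) k"
  shows "density lborel (\<lambda>x. ennreal (P x / c)) = density lborel (\<lambda>x. ennreal (N x / c))"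
proof (rule Levy_uniqueness)
  show "real_distribution (density lborel (\<lambda>x. ennreal (P x / c)))"
    using P c by (intro real_distribution_density_normalized) auto
  show "real_distribution (density lborel (\<lambda>x. ennreal (N x / c)))"
    using N c by (intro real_distribution_density_normalized) auto
  show "char (density lborel (\<lambda>x. ennreal (P x / c))) = char (density lborel (\<lambda>x. ennreal (N x / c)))"
  proof
    fix t
    have "char (density lborel (\<lambda>x. ennreal (P x / c))) t
        = fourier_transform (\<lambda>\<tau>. complex_of_real (P \<tau>)) t / complex_of_real c"
      using P c by (intro char_density_normalized) auto
    also have "\<dots> = char (density lborel (\<lambda>x. ennreal (N x / c))) t"
      using N c eq by (subst char_density_normalized) auto
    finally show "char (density lborel (\<lambda>x. ennreal (P x / c))) t
        = char (density lborel (\<lambda>x. ennreal (N x / c))) t" .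
  qed
qed

lemma AE_eq_if_nonneg_fourier_transform_eq:
  fixes P N :: "real \<Rightarrow> real"
  assumes P: "integrable lborel P" "\<And>x. P x \<ge> 0" and N: "integrable lborel N" "\<And>x. N x \<ge> 0"
    and eq: "\<And>k. fourier_transform (\<lambda>\<tau>. complex_of_real (P \<tau>)) k
                  = fourier_transform (\<lambda>\<tau>. complex_of_real (N \<tau>)) k"
  shows "AE x in lborel. P x = N x"
proof -
  define c where "c = integral\<^sup>L lborel P"
  have cN: "integral\<^sup>L lborel N = c"
    using eq[of 0] by (simp add: c_def fourier_transform_def)
  have "c \<ge> 0" unfolding c_def using P by simp
  show ?thesis
  proof (cases "c = 0")
    case True
    then have "integral\<^sup>L lborel P = 0" "integral\<^sup>L lborel N = 0"
      using cN by (simp_all add: c_def)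
    then have "AE x in lborel. P x = 0" "AE x in lborel. N x = 0"
      using P N by (simp_all add: integral_nonneg_eq_0_iff_AE)
    then show ?thesis by eventually_elim simp
  next
    case False
    then have c: "c > 0" using \<open>c \<ge> 0\<close> by simp
    have "density lborel (\<lambda>x. ennreal (P x / c)) = density lborel (\<lambda>x. ennreal (N x / c))"
      using P N cN c eq by (intro density_normalized_eq_if_fourier_transform_eq) (simp_all add: c_def)
    then have "AE x in lborel. ennreal (P x / c) = ennreal (N x / c)"
    proof (subst (asm) finite_density_unique)
      have "(\<integral>\<^sup>+x. ennreal (P x / c) \<partial>lborel) = ennreal (integral\<^sup>L lborel (\<lambda>x. P x / c))"
        using P c by (intro nn_integral_eq_integral) auto
      then show "(\<integral>\<^sup>+x. ennreal (P x / c) \<partial>lborel) \<noteq> \<infinity>" by simp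
    qed (use P N in auto)
    then show ?thesis
    proof eventually_elim
      case (elim x)
      then have "P x / c = N x / c" using P(2)[of x] N(2)[of x] c by (simp add: ennreal_inj)
      then show ?case using c by simp
    qed
  qed
qed

lemma fourier_transform_real_eq_0_imp_AE_0:
  fixes v :: "real \<Rightarrow> real"
  assumes v: "integrable lborel v"
    and vanish: "\<And>k. fourier_transform (\<lambda>\<tau>. complex_of_real (v \<tau>)) k = 0"
  shows "AE \<tau> in lborel. v \<tau> = 0"
proof -
  define P where "P \<tau> = max (v \<tau>) 0" for \<tau>
  define N where "N \<tau> = max (- v \<tau>) 0" for \<tau>
  have P: "integrable lborel P" and N: "integrable lborel N"
    unfolding P_def N_def using v by (auto intro!: integrable_max)
  have "fourier_transform (\<lambda>\<tau>. complex_of_real (P \<tau>)) k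
      - fourier_transform (\<lambda>\<tau>. complex_of_real (N \<tau>)) k = 0" for k
  proof -
    have "(\<lambda>\<tau>. complex_of_real (v \<tau>)) = (\<lambda>\<tau>. complex_of_real (P \<tau>) - complex_of_real (N \<tau>))"
      by (auto simp: P_def N_def max_def)
    then show ?thesis
      using vanish[of k] P N by (simp add: fourier_transform_diff)
  qed
  then have "AE \<tau> in lborel. P \<tau> = N \<tau>"
    by (intro AE_eq_if_nonneg_fourier_transform_eq P N) (auto simp: P_def N_def)
  then show ?thesis by eventually_elim (auto simp: P_def N_def max_def split: if_splits)
qed

lemma fourier_transform_eq_0_imp_AE_0:
  fixes w :: "real \<Rightarrow> complex"
  assumes w: "integrable lborel w" and vanish: "\<And>k. fourier_transform w k = 0"
  shows "AE \<tau> in lborel. w \<tau> = 0"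
proof -
  have wc: "integrable lborel (\<lambda>\<tau>. cnj (w \<tau>))" using w by (rule integrable_cnj)
  have vanish_cnj: "fourier_transform (\<lambda>\<tau>. cnj (w \<tau>)) k = 0" for k
    by (simp add: fourier_transform_cnj vanish)
  have "AE \<tau> in lborel. Re (w \<tau>) = 0"
  proof (rule fourier_transform_real_eq_0_imp_AE_0)
    show "integrable lborel (\<lambda>\<tau>. Re (w \<tau>))" using w by (rule integrable_Re)
    have "(\<lambda>\<tau>. complex_of_real (Re (w \<tau>))) = (\<lambda>\<tau>. (w \<tau> + cnj (w \<tau>)) / 2)"
      by (simp add: complex_add_cnj)
    then have "fourier_transform (\<lambda>\<tau>. complex_of_real (Re (w \<tau>))) k
        = fourier_transform (\<lambda>\<tau>. w \<tau> + cnj (w \<tau>)) k / 2" for k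
      by (simp only: fourier_transform_divide)
    then show "fourier_transform (\<lambda>\<tau>. complex_of_real (Re (w \<tau>))) k = 0" for k
      by (simp add: fourier_transform_add[OF w wc] vanish vanish_cnj)
  qed
  moreover have "AE \<tau> in lborel. Im (w \<tau>) = 0"
  proof (rule fourier_transform_real_eq_0_imp_AE_0)
    show "integrable lborel (\<lambda>\<tau>. Im (w \<tau>))" using w by (rule integrable_Im)
    have "(\<lambda>\<tau>. complex_of_real (Im (w \<tau>))) = (\<lambda>\<tau>. (w \<tau> - cnj (w \<tau>)) / (2 * \<i>))"
      by (auto simp: fun_eq_iff complex_eq_iff)
    then have "fourier_transform (\<lambda>\<tau>. complex_of_real (Im (w \<tau>))) k
        = fourier_transform (\<lambda>\<tau>. w \<tau> - cnj (w \<tau>)) k / (2 * \<i>)" for k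
      by (simp only: fourier_transform_divide)
    then show "fourier_transform (\<lambda>\<tau>. complex_of_real (Im (w \<tau>))) k = 0" for k
      by (simp add: fourier_transform_diff[OF w wc] vanish vanish_cnj)
  qed
  ultimately show ?thesis by eventually_elim (simp add: complex_eq_iff)
qed

lemma fourier_transform_eq_on_interval_imp_AE_eq:
  fixes u v :: "real \<Rightarrow> complex"
  assumes u: "integrable lborel u" "\<And>\<tau>. R < \<bar>\<tau>\<bar> \<Longrightarrow> u \<tau> = 0"
    and v: "integrable lborel v" "\<And>\<tau>. R < \<bar>\<tau>\<bar> \<Longrightarrow> v \<tau> = 0"
    and "a < b" and eq: "\<And>k. k \<in> {a<..<b} \<Longrightarrow> fourier_transform u k = fourier_transform v k"
  shows "AE \<tau> in lborel. u \<tau> = v \<tau>"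
proof -
  have w: "integrable lborel (\<lambda>\<tau>. u \<tau> - v \<tau>)" using u v by simp
  have supp: "\<And>\<tau>. R < \<bar>\<tau>\<bar> \<Longrightarrow> u \<tau> - v \<tau> = 0" using u v by simp
  have "fourier_transform (\<lambda>\<tau>. u \<tau> - v \<tau>) k = 0" if "k \<in> {a<..<b}" for k
    using eq[OF that] by (simp add: fourier_transform_diff[OF u(1) v(1)])
  then have "fourier_transform (\<lambda>\<tau>. u \<tau> - v \<tau>) k = 0" for k
    using fourier_transform_eq_0_if_eq_0_on_interval[OF w supp \<open>a < b\<close>] by blast
  then have "AE \<tau> in lborel. u \<tau> - v \<tau> = 0" by (rule fourier_transform_eq_0_imp_AE_0[OF w])
  then show ?thesis by eventually_elim simp
qed

section \<open>Lebesgue measure under orthogonal maps\<close>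

definition basis_map :: "('a::euclidean_space \<Rightarrow> 'b::real_vector) \<Rightarrow> 'a \<Rightarrow> 'b" where
  "basis_map W x = (\<Sum>b\<in>Basis. (x \<bullet> b) *\<^sub>R W b)"

lemma linear_basis_map: "linear (basis_map W)"
  unfolding basis_map_def[abs_def]
  by (rule linearI) (simp_all add: inner_add_left scaleR_add_left sum.distrib scaleR_sum_right)

lemma borel_measurable_linear:
  fixes f :: "'a::euclidean_space \<Rightarrow> 'b::euclidean_space"
  assumes "linear f"
  shows "f \<in> borel_measurable borel"
  using assms by (intro borel_measurable_continuous_onI linear_continuous_on)
    (simp add: linear_conv_bounded_linear)

lemma inner_basis_map_image:
  fixes W :: "'a::euclidean_space \<Rightarrow> 'b::real_inner"
  assumes orthonormal: "\<And>b c. b \<in> Basis \<Longrightarrow> c \<in> Basis \<Longrightarrow> W b \<bullet> W c = (if b = c then 1 else 0)"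
    and "b \<in> Basis"
  shows "basis_map W x \<bullet> W b = x \<bullet> b"
  using assms(2) by (simp add: basis_map_def inner_sum_left orthonormal if_distrib sum.delta
      cong: if_cong)

lemma inner_basis_map:
  fixes W :: "'a::euclidean_space \<Rightarrow> 'b::real_inner"
  assumes orthonormal: "\<And>b c. b \<in> Basis \<Longrightarrow> c \<in> Basis \<Longrightarrow> W b \<bullet> W c = (if b = c then 1 else 0)"
  shows "basis_map W x \<bullet> basis_map W y = x \<bullet> y"
proof -
  have "basis_map W x \<bullet> basis_map W y = (\<Sum>b\<in>Basis. (y \<bullet> b) * (basis_map W x \<bullet> W b))"
    by (simp add: basis_map_def[of W y] inner_sum_right)
  also have "\<dots> = x \<bullet> y"
    by (simp add: inner_basis_map_image[OF orthonormal] euclidean_inner[of x y] mult.commute)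
  finally show ?thesis .
qed

lemma orthogonal_transformation_basis_map:
  fixes W :: "'a::euclidean_space \<Rightarrow> 'a"
  assumes "\<And>b c. b \<in> Basis \<Longrightarrow> c \<in> Basis \<Longrightarrow> W b \<bullet> W c = (if b = c then 1 else 0)"
  shows "orthogonal_transformation (basis_map W)"
  unfolding orthogonal_transformation_def using linear_basis_map inner_basis_map[OF assms] by blast

lemma bij_betw_Basis_orthonormal:
  fixes \<delta> :: "'a::euclidean_space \<Rightarrow> 'b::euclidean_space"
  assumes "bij_betw \<delta> Basis Basis" and "b \<in> Basis" and "c \<in> Basis"
  shows "\<delta> b \<bullet> \<delta> c = (if b = c then 1 else 0)"
proof -
  have "\<delta> b \<in> Basis" "\<delta> c \<in> Basis" and "\<delta> b = \<delta> c \<longleftrightarrow> b = c"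
    using assms by (auto simp: bij_betw_def dest: inj_onD)
  then show ?thesis by (simp add: inner_Basis)
qed


text \<open>A bijection between the bases only permutes coordinates, so it maps boxes to boxes of the
  same volume.\<close>
lemma distr_lborel_basis_map_bij:
  fixes \<delta> :: "'b::euclidean_space \<Rightarrow> 'a::euclidean_space"
  assumes bij: "bij_betw \<delta> Basis Basis"
  shows "distr lborel borel (basis_map \<delta>) = lborel"
proof (rule lborel_eqI[symmetric])
  have image: "\<delta> ` Basis = Basis" using bij by (simp add: bij_betw_def)
  have coord: "basis_map \<delta> x \<bullet> \<delta> c = x \<bullet> c" if "c \<in> Basis" for x c
    using that by (intro inner_basis_map_image bij_betw_Basis_orthonormal[OF bij])
  have ball_Basis: "(\<forall>b\<in>Basis. P b) \<longleftrightarrow> (\<forall>c\<in>Basis. P (\<delta> c))" for P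
    by (subst image[symmetric]) blast
  fix l u :: 'a assume lu: "\<And>b. b \<in> Basis \<Longrightarrow> l \<bullet> b \<le> u \<bullet> b"
  define L :: 'b where "L = (\<Sum>c\<in>Basis. (l \<bullet> \<delta> c) *\<^sub>R c)"
  define U :: 'b where "U = (\<Sum>c\<in>Basis. (u \<bullet> \<delta> c) *\<^sub>R c)"
  have L: "L \<bullet> c = l \<bullet> \<delta> c" and U: "U \<bullet> c = u \<bullet> \<delta> c" if "c \<in> Basis" for c
    unfolding L_def U_def using that by (simp_all add: inner_sum_left inner_Basis if_distrib cong: if_cong)
  have "basis_map \<delta> x \<in> box l u \<longleftrightarrow> x \<in> box L U" for x
  proof -
    have "basis_map \<delta> x \<in> box l u
        \<longleftrightarrow> (\<forall>c\<in>Basis. l \<bullet> \<delta> c < basis_map \<delta> x \<bullet> \<delta> c \<and> basis_map \<delta> x \<bullet> \<delta> c < u \<bullet> \<delta> c)"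
      unfolding mem_box by (rule ball_Basis)
    also have "\<dots> \<longleftrightarrow> x \<in> box L U" by (simp add: mem_box coord L U)
    finally show ?thesis .
  qed
  then have "basis_map \<delta> -` box l u = box L U" by auto
  moreover have "emeasure lborel (box L U) = (\<Prod>b\<in>Basis. (u - l) \<bullet> b)"
  proof -
    have "emeasure lborel (box L U) = (\<Prod>c\<in>Basis. (u - l) \<bullet> \<delta> c)"
      using lu image by (subst emeasure_lborel_box) (auto simp: L U inner_diff_left)
    then show ?thesis by (simp only: prod.reindex_bij_betw[OF bij])
  qed
  moreover have "basis_map \<delta> \<in> borel_measurable borel"
    by (rule borel_measurable_linear[OF linear_basis_map])
  ultimately show "emeasure (distr lborel borel (basis_map \<delta>)) (box l u) = (\<Prod>b\<in>Basis. (u - l) \<bullet> b)"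
    by (simp add: emeasure_distr)
qed simp


lemma distr_lborel_orthogonal_transformation_cart:
  fixes R :: "real^'n::{finite,wellorder} \<Rightarrow> real^'n::_"
  assumes R: "orthogonal_transformation R"
  shows "distr lborel borel R = lborel"
proof (rule lborel_eqI[symmetric])
  fix l u :: "(real, 'n) vec" assume lu: "\<And>b. b \<in> Basis \<Longrightarrow> l \<bullet> b \<le> u \<bullet> b"
  have lin: "linear R" using R by (rule orthogonal_transformation_linear)
  have preimage: "R -` box l u = inv R ` box l u"
    using orthogonal_transformation_bij[OF R] by (simp add: bij_vimage_eq_inv_image)
  have "open (R -` box l u)"
    using lin by (intro open_vimage) (auto simp: linear_continuous_on linear_conv_bounded_linear)
  then have "measure lborel (R -` box l u) = measure lebesgue (inv R ` box l u)"
    by (simp add: measure_completion preimage)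
  also have "\<dots> = measure lborel (box l u)"
    using orthogonal_transformation_inv[OF R]
    by (simp add: measure_orthogonal_image lmeasurable_box measure_completion)
  finally have "measure lborel (R -` box l u) = measure lborel (box l u)" .
  moreover have "bounded (R -` box l u)"
    unfolding preimage using orthogonal_transformation_inv[OF R]
    by (intro bounded_linear_image) (auto simp: orthogonal_transformation_linear
        linear_conv_bounded_linear[symmetric])
  ultimately have "emeasure lborel (R -` box l u) = emeasure lborel (box l u)"
    using emeasure_bounded_finite[of "R -` box l u"] emeasure_lborel_box_finite[of l u]
    by (simp add: emeasure_eq_ennreal_measure)
  then show "emeasure (distr lborel borel R) (box l u) = (\<Prod>b\<in>Basis. (u - l) \<bullet> b)"
    using lu borel_measurable_linear[OF lin] by (simp add: emeasure_distr emeasure_lborel_box)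
qed simp

lemma basis_map_inv_into:
  fixes \<delta> :: "'a::euclidean_space \<Rightarrow> 'b::euclidean_space"
  assumes \<delta>: "bij_betw \<delta> Basis Basis"
  shows "basis_map \<delta> (basis_map (inv_into Basis \<delta>) y) = y"
proof (rule euclidean_eqI)
  have \<delta>': "bij_betw (inv_into Basis \<delta>) Basis Basis" using \<delta> by (rule bij_betw_inv_into)
  fix b :: 'b assume "b \<in> Basis"
  then obtain c where c: "c \<in> Basis" "b = \<delta> c" using \<delta> by (auto simp: bij_betw_def)
  have "basis_map \<delta> (basis_map (inv_into Basis \<delta>) y) \<bullet> b
      = basis_map (inv_into Basis \<delta>) y \<bullet> inv_into Basis \<delta> (\<delta> c)"
    using c \<delta> by (simp add: inner_basis_map_image bij_betw_Basis_orthonormal bij_betw_def)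
  also have "\<dots> = y \<bullet> b"
    unfolding c(2) using c \<delta> bij_betw_Basis_orthonormal[OF \<delta>']
    by (intro inner_basis_map_image) (auto simp: bij_betw_def)
  finally show "basis_map \<delta> (basis_map (inv_into Basis \<delta>) y) \<bullet> b = y \<bullet> b" .
qed

text \<open>The Lebesgue measure on an abstract Euclidean space is transported to that on
  \<open>real^'n\<close> along an isometry permuting the bases, where invariance is known.\<close>
lemma distr_lborel_orthogonal_transformation:
  fixes Q :: "'a::euclidean_space \<Rightarrow> 'a"
  assumes Q: "orthogonal_transformation Q" and card: "CARD('n::{finite,wellorder}) = DIM('a)"
  shows "distr lborel borel Q = lborel"
proof -
  obtain \<delta> :: "(real, 'n) vec \<Rightarrow> 'a" where \<delta>: "bij_betw \<delta> Basis Basis"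
    using finite_same_card_bij[of "Basis :: (real,'n) vec set" "Basis :: 'a set"] card by auto
  define T where "T = basis_map \<delta>"
  define T' where "T' = basis_map (inv_into Basis \<delta>)"
  have \<delta>': "bij_betw (inv_into Basis \<delta>) Basis Basis" using \<delta> by (rule bij_betw_inv_into)
  define R where "R = T' \<circ> Q \<circ> T"
  have "orthogonal_transformation R"
    unfolding orthogonal_transformation_def
  proof (intro conjI allI)
    show "linear R"
      unfolding R_def T_def T'_def using Q
      by (intro linear_compose linear_basis_map orthogonal_transformation_linear)
    show "R v \<bullet> R w = v \<bullet> w" for v w
      using Q bij_betw_Basis_orthonormal[OF \<delta>] bij_betw_Basis_orthonormal[OF \<delta>']
      by (simp add: R_def T_def T'_def inner_basis_map orthogonal_transformation_def)
  qed
  then have R: "distr lborel borel R = lborel"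
    by (rule distr_lborel_orthogonal_transformation_cart)
  have T: "distr lborel borel T = lborel" unfolding T_def by (rule distr_lborel_basis_map_bij[OF \<delta>])
  have [measurable]: "T \<in> borel_measurable borel" "Q \<in> borel_measurable borel"
    "R \<in> borel_measurable borel"
    unfolding T_def using Q \<open>orthogonal_transformation R\<close>
    by (auto intro!: borel_measurable_linear linear_basis_map orthogonal_transformation_linear)
  have "Q \<circ> T = T \<circ> R" by (auto simp: R_def T_def T'_def basis_map_inv_into[OF \<delta>])
  then have "distr (distr lborel borel T) borel Q = distr (distr lborel borel R) borel T"
    by (simp add: distr_distr)
  then show ?thesis by (simp only: T R)
qed

section \<open>Coordinates adapted to the hyperplanes \<open>\<Pi>\<^sub>\<tau>\<close>\<close>

lemma perp_basis_spec:
  fixes \<theta> :: "'a::euclidean_space"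
  assumes "\<theta> \<noteq> 0"
  shows "\<forall>i<DIM('a) - 1. perp_basis \<theta> i \<bullet> \<theta> = 0 \<and>
        (\<forall>j<DIM('a) - 1. perp_basis \<theta> i \<bullet> perp_basis \<theta> j = (if i = j then 1 else 0))"
proof -
  obtain B where B: "B \<subseteq> {x. \<theta> \<bullet> x = 0}" "pairwise orthogonal B" "\<And>x. x \<in> B \<Longrightarrow> norm x = 1"
    "independent B" "card B = dim {x. \<theta> \<bullet> x = 0}" "span B = {x. \<theta> \<bullet> x = 0}"
    using orthonormal_basis_subspace[OF subspace_hyperplane] by blast
  have "card B = DIM('a) - 1" using B(5) dim_hyperplane[OF assms] by simp
  then obtain h where h: "bij_betw h {..<DIM('a) - 1} B"
    using ex_bij_betw_nat_finite[OF independent_imp_finite[OF B(4)]] by (auto simp: atLeast0LessThan)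
  have "h i \<bullet> \<theta> = 0 \<and> (\<forall>j<DIM('a) - 1. h i \<bullet> h j = (if i = j then 1 else 0))"
    if i: "i < DIM('a) - 1" for i
  proof (intro conjI allI impI)
    have hi: "h i \<in> B" using h i by (auto simp: bij_betw_def)
    then show "h i \<bullet> \<theta> = 0" using B(1) by (auto simp: inner_commute)
    fix j assume j: "j < DIM('a) - 1"
    then have hj: "h j \<in> B" using h by (auto simp: bij_betw_def)
    show "h i \<bullet> h j = (if i = j then 1 else 0)"
    proof (cases "i = j")
      case True
      then show ?thesis using B(3)[OF hi] by (simp add: norm_eq_1)
    next
      case False
      then have "h i \<noteq> h j" using h i j by (auto simp: bij_betw_def inj_on_def)
      then show ?thesis using B(2) hi hj False by (auto simp: pairwise_def orthogonal_def)
    qed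
  qed
  then have "\<exists>e. \<forall>i<DIM('a) - 1. e i \<bullet> \<theta> = 0 \<and>
      (\<forall>j<DIM('a) - 1. e i \<bullet> e j = (if i = j then 1 else 0))"
    by blast
  then show ?thesis unfolding perp_basis_def by (rule someI_ex)
qed

lemma perp_basis_orthogonal: "\<theta> \<noteq> 0 \<Longrightarrow> i < DIM('a) - 1 \<Longrightarrow> perp_basis \<theta> i \<bullet> (\<theta> :: 'a::euclidean_space) = 0"
  using perp_basis_spec by blast

lemma perp_basis_orthonormal:
  "\<theta> \<noteq> 0 \<Longrightarrow> i < DIM('a) - 1 \<Longrightarrow> j < DIM('a) - 1 \<Longrightarrow>
    perp_basis (\<theta> :: 'a::euclidean_space) i \<bullet> perp_basis \<theta> j = (if i = j then 1 else 0)"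
  using perp_basis_spec by blast


lemma pair_sigma_finite_lborel_PiM:
  "pair_sigma_finite lborel (PiM {..<n::nat} (\<lambda>_. lborel :: real measure))"
proof -
  interpret finite_product_sigma_finite "\<lambda>_::nat. lborel :: real measure" "{..<n}"
    by standard auto
  show ?thesis by (intro pair_sigma_finite.intro lborel.sigma_finite_measure_axioms
        sigma_finite_measure_axioms)
qed

definition insert_coordinate ::
  "'a::euclidean_space \<Rightarrow> (nat \<Rightarrow> 'a) \<Rightarrow> nat \<Rightarrow> real \<times> (nat \<Rightarrow> real) \<Rightarrow> 'a \<Rightarrow> real" where
  "insert_coordinate b0 \<sigma> m p = (\<lambda>b\<in>Basis. if b = b0 then fst p else snd p (inv_into {..<m} \<sigma> b))"

lemma measurable_insert_coordinate:
  fixes b0 :: "'a::euclidean_space"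
  assumes "bij_betw \<sigma> {..<m} (Basis - {b0})"
  shows "insert_coordinate b0 \<sigma> m
    \<in> measurable (lborel \<Otimes>\<^sub>M PiM {..<m} (\<lambda>_. lborel)) (PiM Basis (\<lambda>_. lborel))"
  unfolding insert_coordinate_def
proof (rule measurable_restrict)
  fix b :: 'a assume b: "b \<in> Basis"
  have "inv_into {..<m} \<sigma> b < m" if "b \<noteq> b0"
    using bij_betw_inv_into[OF assms] b that by (auto simp: bij_betw_def)
  then have "(\<lambda>p. snd p (inv_into {..<m} \<sigma> b)) \<in> measurable (lborel \<Otimes>\<^sub>M PiM {..<m} (\<lambda>_. lborel)) lborel"
    if "b \<noteq> b0"
    using that by (intro measurable_compose[OF measurable_snd measurable_component_singleton]) auto
  then show "(\<lambda>p. if b = b0 then fst p else snd p (inv_into {..<m} \<sigma> b))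
      \<in> measurable (lborel \<Otimes>\<^sub>M PiM {..<m} (\<lambda>_. lborel)) lborel"
    by (cases "b = b0") simp_all
qed

lemma vimage_insert_coordinate_PiE:
  fixes b0 :: "'a::euclidean_space"
  assumes b0: "b0 \<in> Basis" and \<sigma>: "bij_betw \<sigma> {..<m} (Basis - {b0})"
  shows "insert_coordinate b0 \<sigma> m -` Pi\<^sub>E Basis A \<inter> space (lborel \<Otimes>\<^sub>M PiM {..<m} (\<lambda>_. lborel))
    = A b0 \<times> Pi\<^sub>E {..<m} (\<lambda>i. A (\<sigma> i))"
proof (intro set_eqI iffI)
  define c where "c = insert_coordinate b0 \<sigma> m"
  define \<sigma>' where "\<sigma>' = inv_into {..<m} \<sigma>"
  have \<sigma>'\<sigma>: "\<sigma>' (\<sigma> i) = i" if "i < m" for i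
    unfolding \<sigma>'_def using \<sigma> that by (simp add: bij_betw_def)
  have \<sigma>\<sigma>': "\<sigma> (\<sigma>' b) = b" if "b \<in> Basis" "b \<noteq> b0" for b
    unfolding \<sigma>'_def using \<sigma> that by (simp add: bij_betw_def f_inv_into_f)
  have \<sigma>'_less: "\<sigma>' b < m" if "b \<in> Basis" "b \<noteq> b0" for b
    using bij_betw_inv_into[OF \<sigma>] that by (auto simp: \<sigma>'_def bij_betw_def)
  have \<sigma>_in: "\<sigma> i \<in> Basis" "\<sigma> i \<noteq> b0" if "i < m" for i using \<sigma> that by (auto simp: bij_betw_def)
  fix p :: "real \<times> (nat \<Rightarrow> real)"
  obtain \<tau> t where p: "p = (\<tau>, t)" by (cases p)
  {
    assume "p \<in> c -` Pi\<^sub>E Basis A \<inter> space (lborel \<Otimes>\<^sub>M PiM {..<m} (\<lambda>_. lborel))"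
    then have "t \<in> Pi\<^sub>E {..<m} (\<lambda>_. UNIV)" and "c p b \<in> A b" if "b \<in> Basis" for b
      using that by (auto simp: p space_pair_measure space_PiM PiE_def Pi_def)
    then show "p \<in> A b0 \<times> Pi\<^sub>E {..<m} (\<lambda>i. A (\<sigma> i))"
      using b0 \<sigma>_in by (force simp: c_def insert_coordinate_def p \<sigma>'_def[symmetric] \<sigma>'\<sigma> PiE_def Pi_def)
  next
    assume "p \<in> A b0 \<times> Pi\<^sub>E {..<m} (\<lambda>i. A (\<sigma> i))"
    then have \<tau>: "\<tau> \<in> A b0" and t: "t \<in> Pi\<^sub>E {..<m} (\<lambda>i. A (\<sigma> i))" by (auto simp: p)
    have "c p b \<in> A b" if b: "b \<in> Basis" for b
    proof (cases "b = b0")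
      case False
      then have "t (\<sigma>' b) \<in> A (\<sigma> (\<sigma>' b))" using t \<sigma>'_less[OF b] by (auto simp: PiE_def Pi_def)
      then show ?thesis
        using b False by (simp add: c_def insert_coordinate_def p \<sigma>'_def[symmetric] \<sigma>\<sigma>')
    qed (use \<tau> b in \<open>simp add: c_def insert_coordinate_def p\<close>)
    moreover have "p \<in> space (lborel \<Otimes>\<^sub>M PiM {..<m} (\<lambda>_. lborel))"
      using t by (auto simp: p space_pair_measure space_PiM PiE_def Pi_def)
    ultimately show "p \<in> c -` Pi\<^sub>E Basis A \<inter> space (lborel \<Otimes>\<^sub>M PiM {..<m} (\<lambda>_. lborel))"
      by (auto simp: c_def insert_coordinate_def PiE_def Pi_def)
  }
qed

lemma distr_insert_coordinate:
  fixes b0 :: "'a::euclidean_space"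
  assumes b0: "b0 \<in> Basis" and \<sigma>: "bij_betw \<sigma> {..<m} (Basis - {b0})"
  shows "distr (lborel \<Otimes>\<^sub>M PiM {..<m} (\<lambda>_. lborel)) (PiM Basis (\<lambda>_. lborel)) (insert_coordinate b0 \<sigma> m)
    = PiM Basis (\<lambda>_. lborel)"
proof -
  interpret product_sigma_finite "\<lambda>_::'a. lborel :: real measure" by standard
  interpret P: finite_product_sigma_finite "\<lambda>_::nat. lborel :: real measure" "{..<m}"
    by standard auto
  show ?thesis
  proof (rule PiM_eqI)
    fix A :: "'a \<Rightarrow> real set" assume A: "\<And>i. i \<in> Basis \<Longrightarrow> A i \<in> sets lborel"
    have \<sigma>_in: "\<sigma> i \<in> Basis" if "i < m" for i using \<sigma> that by (auto simp: bij_betw_def)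
    have "emeasure (distr (lborel \<Otimes>\<^sub>M PiM {..<m} (\<lambda>_. lborel)) (PiM Basis (\<lambda>_. lborel))
          (insert_coordinate b0 \<sigma> m)) (Pi\<^sub>E Basis A)
        = emeasure (lborel \<Otimes>\<^sub>M PiM {..<m} (\<lambda>_. lborel)) (A b0 \<times> Pi\<^sub>E {..<m} (\<lambda>i. A (\<sigma> i)))"
      using A by (subst emeasure_distr[OF measurable_insert_coordinate[OF \<sigma>]])
        (auto intro!: sets_PiM_I_finite simp: vimage_insert_coordinate_PiE[OF b0 \<sigma>])
    also have "\<dots> = emeasure lborel (A b0) * (\<Prod>i<m. emeasure lborel (A (\<sigma> i)))"
    proof -
      have "emeasure (PiM {..<m} (\<lambda>_. lborel)) (Pi\<^sub>E {..<m} (\<lambda>i. A (\<sigma> i)))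
          = (\<Prod>i<m. emeasure lborel (A (\<sigma> i)))"
        using A \<sigma>_in by (intro P.emeasure_PiM) auto
      then show ?thesis
        using A b0 \<sigma>_in by (simp add: P.emeasure_pair_measure_Times sets_PiM_I_finite)
    qed
    also have "\<dots> = (\<Prod>b\<in>Basis. emeasure lborel (A b))"
      using b0 prod.reindex_bij_betw[OF \<sigma>, of "\<lambda>b. emeasure lborel (A b)"]
      by (simp add: prod.remove)
    finally show "emeasure (distr (lborel \<Otimes>\<^sub>M PiM {..<m} (\<lambda>_. lborel)) (PiM Basis (\<lambda>_. lborel))
        (insert_coordinate b0 \<sigma> m)) (Pi\<^sub>E Basis A) = (\<Prod>b\<in>Basis. emeasure lborel (A b))" .
  qed simp_all
qed

definition hyperplane_chart :: "'a::euclidean_space \<Rightarrow> real \<times> (nat \<Rightarrow> real) \<Rightarrow> 'a" where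
  "hyperplane_chart \<theta> p = (- fst p) *\<^sub>R \<theta> + (\<Sum>i<DIM('a) - 1. snd p i *\<^sub>R perp_basis \<theta> i)"

lemma hyperplane_integral_chart:
  fixes \<theta> :: "'a::euclidean_space"
  shows "hyperplane_integral \<theta> f \<tau>
    = (\<integral>t. f (hyperplane_chart \<theta> (\<tau>, t)) \<partial>PiM {..<DIM('a) - 1} (\<lambda>_. lborel))"
  by (simp add: hyperplane_integral_def hyperplane_chart_def)

lemma measurable_hyperplane_chart [measurable]:
  "hyperplane_chart \<theta> \<in> measurable (lborel \<Otimes>\<^sub>M PiM {..<DIM('a::euclidean_space) - 1} (\<lambda>_. lborel))
    (borel :: 'a measure)"
  unfolding hyperplane_chart_def[abs_def]
proof (intro borel_measurable_add borel_measurable_scaleR borel_measurable_sum)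
  fix i assume "i \<in> {..<DIM('a) - 1}"
  then have "(\<lambda>p. snd p i) \<in> measurable (lborel \<Otimes>\<^sub>M PiM {..<DIM('a) - 1} (\<lambda>_. lborel)) lborel"
    by (intro measurable_compose[OF measurable_snd measurable_component_singleton])
  then show "(\<lambda>p. snd p i) \<in> borel_measurable (lborel \<Otimes>\<^sub>M PiM {..<DIM('a) - 1} (\<lambda>_. lborel))"
    by (simp add: measurable_lborel2)
qed auto

lemma inner_hyperplane_chart:
  assumes "norm \<theta> = 1"
  shows "hyperplane_chart \<theta> p \<bullet> \<theta> = - fst p"
proof -
  have "\<theta> \<noteq> 0" using assms by auto
  then have "(\<Sum>i<DIM('a) - 1. snd p i *\<^sub>R perp_basis \<theta> i) \<bullet> \<theta> = 0"
    by (simp add: inner_sum_left perp_basis_orthogonal)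
  then show ?thesis
    using assms by (simp add: hyperplane_chart_def inner_add_left inner_diff_left norm_eq_1)
qed

text \<open>The chart is the orthogonal map sending the standard basis to the frame
  \<open>-\<theta>, e\<^sub>0, \<dots>, e\<^sub>n\<^sub>-\<^sub>2\<close>, applied to the coordinates \<open>(\<tau>, t)\<close> spread over \<open>Basis\<close>.\<close>
lemma hyperplane_chart_eq_orthogonal_image:
  fixes \<theta> b0 :: "'a::euclidean_space"
  assumes \<theta>: "norm \<theta> = 1" and b0: "b0 \<in> Basis" and \<sigma>: "bij_betw \<sigma> {..<DIM('a) - 1} (Basis - {b0})"
  obtains Q where "orthogonal_transformation Q"
    and "\<And>p. hyperplane_chart \<theta> p = Q (\<Sum>b\<in>Basis. insert_coordinate b0 \<sigma> (DIM('a) - 1) p b *\<^sub>R b)"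
proof
  define m where "m = DIM('a) - 1"
  define e where "e = perp_basis \<theta>"
  define \<sigma>' where "\<sigma>' = inv_into {..<m} \<sigma>"
  define W where "W b = (if b = b0 then - \<theta> else e (\<sigma>' b))" for b
  have "\<theta> \<noteq> 0" using \<theta> by auto
  have \<sigma>': "bij_betw \<sigma>' (Basis - {b0}) {..<m}"
    unfolding \<sigma>'_def using \<sigma> by (simp add: m_def bij_betw_inv_into)
  then have \<sigma>'_less: "\<sigma>' b < m" if "b \<in> Basis" "b \<noteq> b0" for b
    using that by (auto simp: bij_betw_def)
  have orthonormal: "W b \<bullet> W c = (if b = c then 1 else 0)" if "b \<in> Basis" "c \<in> Basis" for b c
  proof -
    have "\<sigma>' b = \<sigma>' c \<longleftrightarrow> b = c" if "b \<noteq> b0" "c \<noteq> b0"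
      using \<sigma>' that \<open>b \<in> Basis\<close> \<open>c \<in> Basis\<close> by (auto simp: bij_betw_def inj_on_def)
    moreover have "\<theta> \<bullet> e i = 0" if "i < m" for i
      using \<open>\<theta> \<noteq> 0\<close> that unfolding e_def m_def by (metis inner_commute perp_basis_orthogonal)
    ultimately show ?thesis
      using that \<theta> \<open>\<theta> \<noteq> 0\<close> \<sigma>'_less
      by (auto simp: W_def e_def m_def perp_basis_orthogonal perp_basis_orthonormal inner_commute
          norm_eq_1)
  qed
  show "orthogonal_transformation (basis_map W)"
    by (rule orthogonal_transformation_basis_map[OF orthonormal])
  fix p
  define c where "c = insert_coordinate b0 \<sigma> m p"
  have "(\<Sum>b\<in>Basis. c b *\<^sub>R b) \<bullet> b = c b" if "b \<in> Basis" for b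
    using that by (simp add: inner_sum_left inner_Basis if_distrib cong: if_cong)
  then have "basis_map W (\<Sum>b\<in>Basis. c b *\<^sub>R b) = (\<Sum>b\<in>Basis. c b *\<^sub>R W b)"
    unfolding basis_map_def by (intro sum.cong) simp_all
  also have "\<dots> = c b0 *\<^sub>R W b0 + (\<Sum>b\<in>Basis - {b0}. c b *\<^sub>R W b)"
    using b0 by (simp add: sum.remove)
  also have "(\<Sum>b\<in>Basis - {b0}. c b *\<^sub>R W b) = (\<Sum>b\<in>Basis - {b0}. snd p (\<sigma>' b) *\<^sub>R e (\<sigma>' b))"
    by (intro sum.cong refl) (auto simp: c_def insert_coordinate_def \<sigma>'_def W_def)
  also have "\<dots> = (\<Sum>i<m. snd p i *\<^sub>R e i)"
    by (rule sum.reindex_bij_betw[OF \<sigma>'])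
  moreover have "c b0 = fst p" using b0 by (simp add: c_def insert_coordinate_def)
  moreover have "W b0 = - \<theta>" by (simp add: W_def)
  ultimately show "hyperplane_chart \<theta> p = basis_map W (\<Sum>b\<in>Basis. insert_coordinate b0 \<sigma> (DIM('a) - 1) p b *\<^sub>R b)"
    by (simp add: hyperplane_chart_def m_def e_def c_def)
qed

lemma distr_hyperplane_chart:
  fixes \<theta> :: "'a::euclidean_space"
  assumes \<theta>: "norm \<theta> = 1" and card: "CARD('n::{finite,wellorder}) = DIM('a)"
  shows "distr (lborel \<Otimes>\<^sub>M PiM {..<DIM('a) - 1} (\<lambda>_. lborel)) borel (hyperplane_chart \<theta>) = lborel"
proof -
  define m where "m = DIM('a) - 1"
  obtain b0 :: 'a where b0: "b0 \<in> Basis" using nonempty_Basis by blast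
  have "card (Basis - {b0} :: 'a set) = m" using b0 by (simp add: m_def)
  then obtain \<sigma> where \<sigma>: "bij_betw \<sigma> {..<m} (Basis - {b0})"
    using ex_bij_betw_nat_finite[of "Basis - {b0} :: 'a set"] by (auto simp: atLeast0LessThan)
  define c where "c = insert_coordinate b0 \<sigma> m"
  define S where "S f = (\<Sum>b\<in>Basis. f b *\<^sub>R b)" for f :: "'a \<Rightarrow> real"
  obtain Q where Q: "orthogonal_transformation Q" and chart: "\<And>p. hyperplane_chart \<theta> p = Q (S (c p))"
    using hyperplane_chart_eq_orthogonal_image[OF \<theta> b0 \<sigma>[unfolded m_def]]
    unfolding S_def c_def m_def by blast
  have [measurable]: "Q \<in> borel_measurable borel"
    using Q by (intro borel_measurable_linear orthogonal_transformation_linear)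
  have [measurable]: "S \<in> borel_measurable (PiM Basis (\<lambda>_. lborel))"
    unfolding S_def[abs_def] by measurable
  have c: "c \<in> measurable (lborel \<Otimes>\<^sub>M PiM {..<m} (\<lambda>_. lborel)) (PiM Basis (\<lambda>_. lborel))"
    unfolding c_def by (rule measurable_insert_coordinate[OF \<sigma>])
  have "distr (lborel \<Otimes>\<^sub>M PiM {..<m} (\<lambda>_. lborel)) borel (hyperplane_chart \<theta>)
      = distr (distr (distr (lborel \<Otimes>\<^sub>M PiM {..<m} (\<lambda>_. lborel)) (PiM Basis (\<lambda>_. lborel)) c)
          borel S) borel Q"
    using c by (simp add: distr_distr comp_def chart[abs_def])
  also have "\<dots> = lborel"
  proof -
    have "distr (PiM Basis (\<lambda>_. lborel)) borel S = lborel"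
      unfolding S_def by (rule lborel_eq[symmetric])
    then show ?thesis
      by (simp add: c_def distr_insert_coordinate[OF b0 \<sigma>] distr_lborel_orthogonal_transformation[OF Q card])
  qed
  finally show ?thesis by (simp add: m_def)
qed

lemma hyperplane_integral_fubini:
  fixes \<theta> :: "'a::euclidean_space" and F :: "'a \<Rightarrow> complex"
  assumes \<theta>: "norm \<theta> = 1" and card: "CARD('n::{finite,wellorder}) = DIM('a)"
    and F: "integrable lborel F"
  shows "integrable lborel (hyperplane_integral \<theta> F)"
    and "integral\<^sup>L lborel F = (\<integral>\<tau>. hyperplane_integral \<theta> F \<tau> \<partial>lborel)"
proof -
  interpret pair_sigma_finite lborel "PiM {..<DIM('a) - 1} (\<lambda>_. lborel :: real measure)"
    by (rule pair_sigma_finite_lborel_PiM)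
  note chart = distr_hyperplane_chart[OF \<theta> card]
  have [measurable]: "F \<in> borel_measurable borel" using F by simp
  have "integrable (distr (lborel \<Otimes>\<^sub>M PiM {..<DIM('a) - 1} (\<lambda>_. lborel)) borel
      (hyperplane_chart \<theta>)) F"
    unfolding chart by (rule F)
  then have "integrable (lborel \<Otimes>\<^sub>M PiM {..<DIM('a) - 1} (\<lambda>_. lborel)) (\<lambda>p. F (hyperplane_chart \<theta> p))"
    by (subst (asm) integrable_distr_eq[OF measurable_hyperplane_chart]) simp_all
  note integrable = this
  then show "integrable lborel (hyperplane_integral \<theta> F)"
    using integrable_fst' by (simp add: hyperplane_integral_chart[abs_def])
  have "integral\<^sup>L lborel F
      = (\<integral>p. F (hyperplane_chart \<theta> p) \<partial>(lborel \<Otimes>\<^sub>M PiM {..<DIM('a) - 1} (\<lambda>_. lborel)))"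
    by (subst chart[symmetric], rule integral_distr[OF measurable_hyperplane_chart]) simp
  also have "\<dots> = (\<integral>\<tau>. hyperplane_integral \<theta> F \<tau> \<partial>lborel)"
    using integral_fst'[OF integrable] by (simp add: hyperplane_integral_chart)
  finally show "integral\<^sup>L lborel F = (\<integral>\<tau>. hyperplane_integral \<theta> F \<tau> \<partial>lborel)" .
qed

lemma AE_hyperplane_chart_not_in:
  fixes \<theta> :: "'a::euclidean_space"
  assumes \<theta>: "norm \<theta> = 1" and card: "CARD('n::{finite,wellorder}) = DIM('a)"
    and N: "N \<in> null_sets (lborel :: 'a measure)"
  shows "AE \<tau> in lborel. AE t in PiM {..<DIM('a) - 1} (\<lambda>_. lborel). hyperplane_chart \<theta> (\<tau>, t) \<notin> N"
proof -
  interpret pair_sigma_finite lborel "PiM {..<DIM('a) - 1} (\<lambda>_. lborel :: real measure)"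
    by (rule pair_sigma_finite_lborel_PiM)
  have "AE y in distr (lborel \<Otimes>\<^sub>M PiM {..<DIM('a) - 1} (\<lambda>_. lborel)) borel (hyperplane_chart \<theta>).
      y \<notin> N"
    unfolding distr_hyperplane_chart[OF \<theta> card] using N by (rule AE_not_in)
  then have "AE p in lborel \<Otimes>\<^sub>M PiM {..<DIM('a) - 1} (\<lambda>_. lborel). hyperplane_chart \<theta> p \<notin> N"
    using N by (subst (asm) AE_distr_iff[OF measurable_hyperplane_chart]) auto
  then show ?thesis by (rule AE_pair)
qed

section \<open>The far field of an admissible pair\<close>

lemma finite_union_domainsD:
  assumes "finite_union_domains D"
  shows "open D" and "bounded D" and "D \<noteq> {}"
  using assms unfolding finite_union_domains_def by (auto intro: bounded_Union)

lemma subset_strip_hull: "bounded D \<Longrightarrow> D \<subseteq> strip_hull D \<theta>"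
  by (auto simp: strip_hull_def intro!: cINF_lower cSUP_upper
      bounded_inner_imp_bdd_below bounded_inner_imp_bdd_above)

lemma INF_inner_less_SUP_inner:
  fixes D :: "'a::euclidean_space set"
  assumes "open D" "bounded D" "D \<noteq> {}" and "\<theta> \<noteq> 0"
  shows "(INF z\<in>D. z \<bullet> \<theta>) < (SUP z\<in>D. z \<bullet> \<theta>)"
proof -
  obtain z \<epsilon> where "\<epsilon> > 0" and ball: "ball z \<epsilon> \<subseteq> D"
    using assms(1,3) by (meson ex_in_conv open_contains_ball)
  define v where "v = (\<epsilon> / (2 * norm \<theta>)) *\<^sub>R \<theta>"
  have "norm v < \<epsilon>" using \<open>\<epsilon> > 0\<close> assms(4) by (simp add: v_def)
  then have "z + v \<in> D" "z - v \<in> D" by (auto intro!: subsetD[OF ball] simp: dist_norm)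
  then have "z + v \<in> strip_hull D \<theta>" "z - v \<in> strip_hull D \<theta>"
    using subset_strip_hull[OF assms(2)] by auto
  moreover have "v \<bullet> \<theta> > 0" using \<open>\<epsilon> > 0\<close> assms(4) by (simp add: v_def)
  ultimately show ?thesis by (auto simp: strip_hull_def inner_add_left inner_diff_left)
qed

lemma hyperplane_subset_strip_hull:
  "- \<tau> \<in> {(INF z\<in>D. z \<bullet> \<theta>)..(SUP z\<in>D. z \<bullet> \<theta>)} \<Longrightarrow> hyperplane \<theta> \<tau> \<subseteq> strip_hull D \<theta>"
  by (auto simp: hyperplane_def strip_hull_def)

lemma completion_ex_borel_measurable_complex:
  fixes g :: "'a \<Rightarrow> complex"
  assumes "g \<in> borel_measurable (completion M)"
  shows "\<exists>g'\<in>borel_measurable M. AE x in M. g x = g' x"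
proof -
  obtain g1 g2 where [measurable]: "g1 \<in> borel_measurable M" "g2 \<in> borel_measurable M"
    and re: "AE x in M. Re (g x) = g1 x" and im: "AE x in M. Im (g x) = g2 x"
    using completion_ex_borel_measurable_real[of "\<lambda>x. Re (g x)" M]
      completion_ex_borel_measurable_real[of "\<lambda>x. Im (g x)" M] assms by auto
  from re im have "AE x in M. g x = complex_of_real (g1 x) + \<i> * complex_of_real (g2 x)"
    by eventually_elim (simp add: complex_eq_iff)
  then show ?thesis by (intro bexI[of _ "\<lambda>x. complex_of_real (g1 x) + \<i> * complex_of_real (g2 x)"])
      simp_all
qed

text \<open>On a set of finite measure \<open>L\<^sup>2\<close> embeds into \<open>L\<^sup>1\<close>, by \<open>\<bar>x\<bar> \<le> 1 + x\<^sup>2\<close>.\<close>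
lemma square_integrable_bounded_support_representative:
  fixes f :: "'a::euclidean_space \<Rightarrow> complex"
  assumes f: "f \<in> borel_measurable lebesgue" "integrable lebesgue (\<lambda>y. (norm (f y))\<^sup>2)"
    and D: "D \<in> sets borel" "bounded D" and supp: "\<And>y. y \<notin> D \<Longrightarrow> f y = 0"
  obtains f0 where "f0 \<in> borel_measurable borel" "integrable lborel f0"
    "\<And>y. y \<notin> D \<Longrightarrow> f0 y = 0" "AE y in lborel. f y = f0 y"
proof -
  obtain f1 where f1 [measurable]: "f1 \<in> borel_measurable lborel" and "AE y in lborel. f y = f1 y"
    using completion_ex_borel_measurable_complex[of f lborel] f(1) by auto
  define f0 where "f0 y = (if y \<in> D then f1 y else 0)" for y
  have [measurable]: "D \<in> sets borel" "f1 \<in> borel_measurable borel" using D f1 by auto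
  have f0_measurable [measurable]: "f0 \<in> borel_measurable borel" unfolding f0_def by measurable
  have f0_supp: "f0 y = 0" if "y \<notin> D" for y using that by (simp add: f0_def)
  have ae: "AE y in lborel. f y = f0 y"
    using \<open>AE y in lborel. f y = f1 y\<close> by eventually_elim (auto simp: f0_def supp)
  have "integrable lebesgue (\<lambda>y. (norm (f0 y))\<^sup>2)"
  proof (rule integrable_cong_AE_imp[OF f(2)])
    show "AE y in lebesgue. (norm (f y))\<^sup>2 = (norm (f0 y))\<^sup>2"
      using AE_completion[OF ae] by eventually_elim simp
  qed (simp add: measurable_completion)
  then have square: "integrable lborel (\<lambda>y. (norm (f0 y))\<^sup>2)"
    by (subst (asm) integrable_completion) auto
  have "integrable lborel f0"
  proof (rule Bochner_Integration.integrable_bound)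
    show "integrable lborel (\<lambda>y. indicat_real D y + (norm (f0 y))\<^sup>2)"
      using square emeasure_bounded_finite[OF D(2)] by (auto intro!: integrable_real_indicator)
    have le: "x \<le> 1 + x\<^sup>2" for x :: real
    proof -
      have "0 \<le> (x - 1/2)\<^sup>2 + 3/4" by simp
      then show ?thesis by (simp add: power2_eq_square algebra_simps)
    qed
    then have "norm (f0 y) \<le> norm (indicat_real D y + (norm (f0 y))\<^sup>2)" for y
      by (cases "y \<in> D") (simp_all add: f0_supp)
    then show "AE y in lborel. norm (f0 y) \<le> norm (indicat_real D y + (norm (f0 y))\<^sup>2)"
      by simp
  qed simp
  with f0_measurable f0_supp ae show ?thesis using that by blast
qed


lemma hyperplane_integral_eq_0_outside_strip:
  fixes f :: "'a::euclidean_space \<Rightarrow> complex"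
  assumes "norm \<theta> = 1" and "bounded D" and "\<And>y. y \<notin> D \<Longrightarrow> f y = 0"
    and "- \<tau> \<notin> {(INF z\<in>D. z \<bullet> \<theta>)..(SUP z\<in>D. z \<bullet> \<theta>)}"
  shows "hyperplane_integral \<theta> f \<tau> = 0"
proof -
  have "hyperplane_chart \<theta> (\<tau>, t) \<notin> D" for t
    using subset_strip_hull[OF assms(2), of \<theta>] inner_hyperplane_chart[OF assms(1), of "(\<tau>, t)"]
      assms(4) by (auto simp: strip_hull_def)
  then show ?thesis by (simp add: hyperplane_integral_chart assms(3))
qed

text \<open>Slicing the far field integral along the hyperplanes \<open>\<Pi>\<^sub>\<tau>\<close>, on which the phase
  \<open>-k \<theta> \<bullet> y = k \<tau>\<close> is constant.\<close>
lemma far_field_eq_fourier_transform: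
  fixes D :: "'a::euclidean_space set" and f f0 :: "'a \<Rightarrow> complex"
  assumes \<theta>: "norm \<theta> = 1" and card: "CARD('n::{finite,wellorder}) = DIM('a)"
    and f: "f \<in> borel_measurable lebesgue" and D: "D \<in> sets borel"
    and f0: "f0 \<in> borel_measurable borel" "integrable lborel f0"
      "\<And>y. y \<notin> D \<Longrightarrow> f0 y = 0" "AE y in lborel. f y = f0 y"
  shows "far_field D f g \<theta> k = g k * fourier_transform (hyperplane_integral \<theta> f0) k"
proof -
  define F where "F y = exp (- \<i> * complex_of_real (k * (\<theta> \<bullet> y))) * f0 y" for y
  have [measurable]: "f0 \<in> borel_measurable borel" "D \<in> sets borel" using f0 D by auto
  have F_measurable [measurable]: "F \<in> borel_measurable borel" unfolding F_def by measurable
  have "integrable lborel F"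
    using f0(2) by (rule Bochner_Integration.integrable_bound)
      (simp_all add: F_def norm_mult norm_exp_i_times flip: exp_of_real)
  have "far_field D f g \<theta> k
      = (\<integral>y. indicat_real D y *\<^sub>R (exp (- \<i> * complex_of_real (k * (\<theta> \<bullet> y))) * (f y * g k)) \<partial>lebesgue)"
    by (simp add: far_field_def set_lebesgue_integral_def)
  also have "\<dots> = (\<integral>y. g k * F y \<partial>lebesgue)"
  proof (rule integral_cong_AE)
    show "(\<lambda>y. indicat_real D y *\<^sub>R (exp (- \<i> * complex_of_real (k * (\<theta> \<bullet> y))) * (f y * g k)))
        \<in> borel_measurable lebesgue"
    proof -
      have "(\<lambda>y. exp (- \<i> * complex_of_real (k * (\<theta> \<bullet> y)))) \<in> borel_measurable lebesgue"
        "indicat_real D \<in> borel_measurable lebesgue"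
        by (rule measurable_completion, measurable)+
      then show ?thesis using f by measurable
    qed
    show "AE y in lebesgue. indicat_real D y *\<^sub>R (exp (- \<i> * complex_of_real (k * (\<theta> \<bullet> y))) * (f y * g k))
        = g k * F y"
      using AE_completion[OF f0(4)] by eventually_elim (auto simp: F_def f0(3) indicator_def)
  qed (simp add: measurable_completion)
  also have "\<dots> = g k * integral\<^sup>L lborel F" by (simp add: integral_completion)
  also have "integral\<^sup>L lborel F = (\<integral>\<tau>. hyperplane_integral \<theta> F \<tau> \<partial>lborel)"
    by (rule hyperplane_integral_fubini(2)[OF \<theta> card \<open>integrable lborel F\<close>])
  also have "\<dots> = fourier_transform (hyperplane_integral \<theta> f0) k"
  proof -
    have "F (hyperplane_chart \<theta> (\<tau>, t)) = iexp (k * \<tau>) * f0 (hyperplane_chart \<theta> (\<tau>, t))" for \<tau> t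
      using inner_hyperplane_chart[OF \<theta>, of "(\<tau>, t)"] by (simp add: F_def inner_commute)
    then show ?thesis by (simp add: fourier_transform_def hyperplane_integral_chart)
  qed
  finally show ?thesis .
qed

text \<open>Only where the slice integral of \<open>f\<close> is nonzero is the slice integrable, hence a
  measurable function that may be compared with the slice of a representative.\<close>
lemma AE_hyperplane_integral_eq:
  fixes f f0 :: "'a::euclidean_space \<Rightarrow> complex"
  assumes \<theta>: "norm \<theta> = 1" and card: "CARD('n::{finite,wellorder}) = DIM('a)"
    and f0: "f0 \<in> borel_measurable borel" and ae: "AE y in lborel. f y = f0 y"
  shows "AE \<tau> in lborel. hyperplane_integral \<theta> f \<tau> \<noteq> 0 \<longrightarrow>
    hyperplane_integral \<theta> f \<tau> = hyperplane_integral \<theta> f0 \<tau>"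
proof -
  obtain N where N: "N \<in> null_sets lborel" "{y \<in> space lborel. f y \<noteq> f0 y} \<subseteq> N"
    by (rule AE_E[OF ae]) blast
  show ?thesis
    using AE_hyperplane_chart_not_in[OF \<theta> card N(1)]
  proof eventually_elim
    case (elim \<tau>)
    let ?M = "PiM {..<DIM('a) - 1} (\<lambda>_. lborel :: real measure)"
    show ?case
    proof
      assume "hyperplane_integral \<theta> f \<tau> \<noteq> 0"
      then have "integrable ?M (\<lambda>t. f (hyperplane_chart \<theta> (\<tau>, t)))"
        using not_integrable_integral_eq by (fastforce simp: hyperplane_integral_chart)
      moreover have "(\<lambda>t. hyperplane_chart \<theta> (\<tau>, t)) \<in> measurable ?M borel"
        by (rule measurable_compose[OF measurable_Pair2[where ?M1.0 = lborel] measurable_hyperplane_chart])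
          simp_all
      ultimately show "hyperplane_integral \<theta> f \<tau> = hyperplane_integral \<theta> f0 \<tau>"
        unfolding hyperplane_integral_chart using elim N(2) f0
        by (intro integral_cong_AE) (auto elim!: AE_mp intro: measurable_compose)
    qed
  qed
qed


text \<open>\<open>I\<close> is the set of \<open>\<tau>\<close> with \<open>\<Pi>\<^sub>\<tau> \<subseteq> S\<^sub>D(\<theta>)\<close>; the witness \<open>u\<close> is the hyperplane integral of a
  Borel representative of \<open>f\<close>.\<close>
lemma admissible_pair_far_field:
  fixes D :: "'a::euclidean_space set"
  assumes \<theta>: "norm \<theta> = 1" and card: "CARD('n::{finite,wellorder}) = DIM('a)"
    and adm: "admissible_pair D f \<theta>"
  defines "I \<equiv> {- (SUP z\<in>D. z \<bullet> \<theta>)..- (INF z\<in>D. z \<bullet> \<theta>)}"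
  obtains u where "integrable lborel u" and "\<And>\<tau>. \<tau> \<notin> I \<Longrightarrow> u \<tau> = 0"
    and "AE \<tau> in lborel. \<tau> \<in> I \<longrightarrow> u \<tau> \<noteq> 0"
    and "\<And>k. far_field D f g \<theta> k = g k * fourier_transform u k"
proof -
  have D: "open D" "bounded D" using adm by (auto simp: admissible_pair_def finite_union_domainsD)
  have f: "f \<in> borel_measurable lebesgue" "integrable lebesgue (\<lambda>y. (norm (f y))\<^sup>2)"
    "\<And>y. y \<notin> D \<Longrightarrow> f y = 0"
    using adm by (auto simp: admissible_pair_def)
  obtain f0 where f0: "f0 \<in> borel_measurable borel" "integrable lborel f0"
    "\<And>y. y \<notin> D \<Longrightarrow> f0 y = 0" "AE y in lborel. f y = f0 y"
    using square_integrable_bounded_support_representative[OF f(1,2) _ D(2) f(3)] D(1) by auto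
  have I: "\<tau> \<in> I \<longleftrightarrow> - \<tau> \<in> {(INF z\<in>D. z \<bullet> \<theta>)..(SUP z\<in>D. z \<bullet> \<theta>)}" for \<tau>
    by (auto simp: I_def)
  show ?thesis
  proof
    show "integrable lborel (hyperplane_integral \<theta> f0)"
      by (rule hyperplane_integral_fubini(1)[OF \<theta> card f0(2)])
    show "hyperplane_integral \<theta> f0 \<tau> = 0" if "\<tau> \<notin> I" for \<tau>
      using that by (intro hyperplane_integral_eq_0_outside_strip[OF \<theta> D(2) f0(3)]) (auto simp: I_def)
    show "far_field D f g \<theta> k = g k * fourier_transform (hyperplane_integral \<theta> f0) k" for k
      using D(1) by (intro far_field_eq_fourier_transform[OF \<theta> card f(1) _ f0]) simp
    have "{\<tau>. hyperplane \<theta> \<tau> \<subseteq> strip_hull D \<theta> \<and> hyperplane_integral \<theta> f \<tau> = 0} \<in> null_sets lborel"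
      using adm by (simp add: admissible_pair_def)
    from AE_not_in[OF this] AE_hyperplane_integral_eq[OF \<theta> card f0(1,4)]
    show "AE \<tau> in lborel. \<tau> \<in> I \<longrightarrow> hyperplane_integral \<theta> f0 \<tau> \<noteq> 0"
    proof eventually_elim
      case (elim \<tau>)
      show ?case
      proof (intro impI notI)
        assume "\<tau> \<in> I" and f0_zero: "hyperplane_integral \<theta> f0 \<tau> = 0"
        then have "hyperplane \<theta> \<tau> \<subseteq> strip_hull D \<theta>"
          by (intro hyperplane_subset_strip_hull) (auto simp: I_def)
        then show False using elim f0_zero by auto
      qed
    qed
  qed
qed

lemma AE_not_in_greaterThanLessThan_imp_le:
  fixes a b :: real
  assumes "AE x in lborel. x \<notin> {a<..<b}"
  shows "b \<le> a"
proof (rule ccontr)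
  assume "\<not> b \<le> a"
  then have "emeasure lborel {a<..<b} \<noteq> 0" by simp
  moreover have "emeasure lborel {a<..<b} = 0"
    using assms by (subst (asm) AE_iff_measurable[of "{a<..<b}"]) auto
  ultimately show False by contradiction
qed

lemma Icc_subset_Icc_if_AE_eq:
  fixes u v :: "real \<Rightarrow> 'a::zero"
  assumes "AE \<tau> in lborel. u \<tau> = v \<tau>" and "\<And>\<tau>. \<tau> \<notin> {c..d} \<Longrightarrow> u \<tau> = 0"
    and "AE \<tau> in lborel. \<tau> \<in> {c'..d'} \<longrightarrow> v \<tau> \<noteq> 0" and "c' < d'"
  shows "{c'..d'} \<subseteq> {c..d}"
proof -
  have in_Icc: "AE \<tau> in lborel. \<tau> \<in> {c'..d'} \<longrightarrow> \<tau> \<in> {c..d}"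
    using assms(1,3) by eventually_elim (use assms(2) in fastforce)
  have "min c d' \<le> c'"
    using in_Icc by (intro AE_not_in_greaterThanLessThan_imp_le) (auto elim!: AE_mp)
  moreover have "d' \<le> max d c'"
    using in_Icc by (intro AE_not_in_greaterThanLessThan_imp_le) (auto elim!: AE_mp)
  ultimately show ?thesis using \<open>c' < d'\<close> by auto
qed

lemma admissible_pair_INF_less_SUP:
  "admissible_pair D f \<theta> \<Longrightarrow> norm \<theta> = 1 \<Longrightarrow> (INF z\<in>D. z \<bullet> \<theta>) < (SUP z\<in>D. z \<bullet> \<theta>)"
  by (intro INF_inner_less_SUP_inner) (auto simp: admissible_pair_def finite_union_domainsD)

lemma strip_hull_eq_if_far_field_eq:
  fixes D D' :: "'a::euclidean_space set" and f f' :: "'a \<Rightarrow> complex"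
  assumes card: "CARD('n::{finite,wellorder}) = DIM('a)"
    and "a < b" and g_nz: "\<forall>k\<in>{a<..<b}. g k \<noteq> 0" and \<theta>: "norm \<theta> = 1"
    and adm: "admissible_pair D f \<theta>" and adm': "admissible_pair D' f' \<theta>"
    and data: "\<forall>k\<in>{a<..<b}. far_field D f g \<theta> k = far_field D' f' g \<theta> k"
  shows "strip_hull D \<theta> = strip_hull D' \<theta>"
proof -
  define \<alpha> \<beta> \<alpha>' \<beta>' where "\<alpha> = (INF z\<in>D. z \<bullet> \<theta>)" "\<beta> = (SUP z\<in>D. z \<bullet> \<theta>)"
    "\<alpha>' = (INF z\<in>D'. z \<bullet> \<theta>)" "\<beta>' = (SUP z\<in>D'. z \<bullet> \<theta>)"
  obtain u where u: "integrable lborel u" "\<And>\<tau>. \<tau> \<notin> {-\<beta>..-\<alpha>} \<Longrightarrow> u \<tau> = 0"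
    "AE \<tau> in lborel. \<tau> \<in> {-\<beta>..-\<alpha>} \<longrightarrow> u \<tau> \<noteq> 0" "\<And>k. far_field D f g \<theta> k = g k * fourier_transform u k"
    using admissible_pair_far_field[OF \<theta> card adm, where g = g, folded \<alpha>_\<beta>_\<alpha>'_\<beta>'_def] by blast
  obtain u' where u': "integrable lborel u'" "\<And>\<tau>. \<tau> \<notin> {-\<beta>'..-\<alpha>'} \<Longrightarrow> u' \<tau> = 0"
    "AE \<tau> in lborel. \<tau> \<in> {-\<beta>'..-\<alpha>'} \<longrightarrow> u' \<tau> \<noteq> 0" "\<And>k. far_field D' f' g \<theta> k = g k * fourier_transform u' k"
    using admissible_pair_far_field[OF \<theta> card adm', where g = g, folded \<alpha>_\<beta>_\<alpha>'_\<beta>'_def] by blast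
  have "\<alpha> < \<beta>" "\<alpha>' < \<beta>'"
    unfolding \<alpha>_\<beta>_\<alpha>'_\<beta>'_def using adm adm' \<theta> by (simp_all add: admissible_pair_INF_less_SUP)
  define R where "R = max (max \<bar>\<alpha>\<bar> \<bar>\<beta>\<bar>) (max \<bar>\<alpha>'\<bar> \<bar>\<beta>'\<bar>)"
  have "AE \<tau> in lborel. u \<tau> = u' \<tau>"
  proof (rule fourier_transform_eq_on_interval_imp_AE_eq[OF u(1) _ u'(1) _ \<open>a < b\<close>])
    show "u \<tau> = 0" "u' \<tau> = 0" if "R < \<bar>\<tau>\<bar>" for \<tau>
    proof -
      have "\<tau> \<notin> {-\<beta>..-\<alpha>}" "\<tau> \<notin> {-\<beta>'..-\<alpha>'}"
        using that unfolding R_def by (auto simp: abs_le_iff)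
      then show "u \<tau> = 0" "u' \<tau> = 0" by (simp_all add: u(2) u'(2))
    qed
    show "fourier_transform u k = fourier_transform u' k" if "k \<in> {a<..<b}" for k
      using data g_nz that by (simp add: u(4) u'(4))
  qed
  moreover from this have "AE \<tau> in lborel. u' \<tau> = u \<tau>" by eventually_elim simp
  moreover have "- \<beta> < - \<alpha>" "- \<beta>' < - \<alpha>'" using \<open>\<alpha> < \<beta>\<close> \<open>\<alpha>' < \<beta>'\<close> by simp_all
  ultimately have "{-\<beta>'..-\<alpha>'} \<subseteq> {-\<beta>..-\<alpha>}" "{-\<beta>..-\<alpha>} \<subseteq> {-\<beta>'..-\<alpha>'}"
    using Icc_subset_Icc_if_AE_eq[of u u' "-\<beta>" "-\<alpha>" "-\<beta>'" "-\<alpha>'"]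
      Icc_subset_Icc_if_AE_eq[of u' u "-\<beta>'" "-\<alpha>'" "-\<beta>" "-\<alpha>"] u(2,3) u'(2,3) by blast+
  then have "\<alpha> = \<alpha>'" "\<beta> = \<beta>'" using \<open>\<alpha> < \<beta>\<close> by auto
  then show ?thesis unfolding strip_hull_def \<alpha>_\<beta>_\<alpha>'_\<beta>'_def by simp
qed

theorem theorem2p2:
  fixes D D' :: "'a::euclidean_space set"
    and f f' :: "'a \<Rightarrow> complex"
    and g :: "real \<Rightarrow> complex"
    and \<theta> :: 'a
    and kmax a b :: real
  assumes dim: "DIM('a) = 2 \<or> DIM('a) = 3"
    and kmax: "kmax > 0"
    and g_cont: "continuous_on {0<..<kmax} g"
    and I: "a < b" "{a<..<b} \<subseteq> {0<..<kmax}"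
    and g_nz: "\<forall>k\<in>{a<..<b}. g k \<noteq> 0"
    and theta: "norm \<theta> = 1"
    and adm: "admissible_pair D f \<theta>"
    and adm': "admissible_pair D' f' \<theta>"
    and data: "\<forall>k\<in>{a<..<b}. far_field D f g \<theta> k = far_field D' f' g \<theta> k"
  shows "strip_hull D \<theta> = strip_hull D' \<theta>"
  using dim
proof
  assume "DIM('a) = 2"
  then have "CARD(2) = DIM('a)" by simp
  then show ?thesis by (rule strip_hull_eq_if_far_field_eq[OF _ I(1) g_nz theta adm adm' data])
next
  assume "DIM('a) = 3"
  then have "CARD(3) = DIM('a)" by simp
  then show ?thesis by (rule strip_hull_eq_if_far_field_eq[OF _ I(1) g_nz theta adm adm' data])
qed

end
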